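(* Let $K$ be a field and $m,n,r$ positive integers. For positive integers $a,b,c$, let $R_{abc}=K[x_{ij}^k\mid 1\le i\le a,1\le j\le b,1\le k\le c]$ and let $I_{ab}^c\subseteq R_{abc}$ be the ideal generated by all $2$-minors of the horizontal concatenation $(X_1\ \cdots\ X_c)$ and all $2$-minors of the vertical concatenation (the $X_k$ stacked vertically) of the $a\times b$ matrices $X_k=(x_{ij}^k)$, $k=1,\dots,c$. Let $\sigma$ be any permutation of $(m,n,r)$, i.e. $(\sigma(m),\sigma(n),\sigma(r))$ is a reordering of the triple $(m,n,r)$. Then $R_{mnr}/I_{mn}^r\cong R_{\sigma(m)\sigma(n)\sigma(r)}/I_{\sigma(m)\sigma(n)}^{\sigma(r)}$ as $K$-algebras. *)

theory Defs
  imports "HOL-Library.Poly_Mapping" "HOL-Library.Multiset" "HOL-Algebra.QuotRing"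
begin

text \<open>Multivariate polynomials over a field 'k in the variables x_{ij}^k, encoded as
  finitely supported maps from monomials (finitely supported exponent maps on the
  index triples (i,j,k)) to coefficients; multiplication is the convolution product.\<close>

type_synonym 'k mpoly = "((nat \<times> nat \<times> nat) \<Rightarrow>\<^sub>0 nat) \<Rightarrow>\<^sub>0 'k"

definition xvar :: "nat \<Rightarrow> nat \<Rightarrow> nat \<Rightarrow> 'k::field mpoly" where
  "xvar i j k = Poly_Mapping.single (Poly_Mapping.single (i, j, k) 1) 1"

definition pconst :: "'k::field \<Rightarrow> 'k mpoly" where
  "pconst c = Poly_Mapping.single 0 c"

definition pvars :: "'k::field mpoly \<Rightarrow> (nat \<times> nat \<times> nat) set" where
  "pvars p = \<Union> (Poly_Mapping.keys ` Poly_Mapping.keys p)"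

definition Rpoly :: "nat \<Rightarrow> nat \<Rightarrow> nat \<Rightarrow> 'k::field mpoly ring" where
  "Rpoly a b c = \<lparr>carrier = {p. pvars p \<subseteq> {1..a} \<times> {1..b} \<times> {1..c}},
                  mult = (*), one = 1, zero = 0, add = (+)\<rparr>"

text \<open>Horizontal concatenation (X_1 ... X_c): an a x (b*c) matrix, rows 1..a,
  columns 1..b*c; column (k-1)*b + j is column j of X_k.\<close>
definition hcat :: "nat \<Rightarrow> nat \<Rightarrow> nat \<Rightarrow> 'k::field mpoly" where
  "hcat b i p = xvar i ((p - 1) mod b + 1) ((p - 1) div b + 1)"

text \<open>Vertical concatenation of X_1,...,X_c: an (a*c) x b matrix, rows 1..a*c,
  columns 1..b; row (k-1)*a + i is row i of X_k.\<close>
definition vcat :: "nat \<Rightarrow> nat \<Rightarrow> nat \<Rightarrow> 'k::field mpoly" where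
  "vcat a q j = xvar ((q - 1) mod a + 1) j ((q - 1) div a + 1)"

definition minors2 :: "(nat \<Rightarrow> nat \<Rightarrow> 'k::field mpoly) \<Rightarrow> nat \<Rightarrow> nat \<Rightarrow> 'k mpoly set" where
  "minors2 M nr nc = {M i p * M i' q - M i q * M i' p | i i' p q.
      1 \<le> i \<and> i < i' \<and> i' \<le> nr \<and> 1 \<le> p \<and> p < q \<and> q \<le> nc}"

definition Iideal :: "nat \<Rightarrow> nat \<Rightarrow> nat \<Rightarrow> 'k::field mpoly set" where
  "Iideal a b c = genideal (Rpoly a b c)
      (minors2 (hcat b) a (b * c) \<union> minors2 (vcat a) (a * c) b)"

definition Qalg :: "nat \<Rightarrow> nat \<Rightarrow> nat \<Rightarrow> 'k::field mpoly set ring" where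
  "Qalg a b c = Rpoly a b c Quot Iideal a b c"

definition qconst :: "nat \<Rightarrow> nat \<Rightarrow> nat \<Rightarrow> 'k::field \<Rightarrow> 'k mpoly set" where
  "qconst a b c k = Iideal a b c +>\<^bsub>Rpoly a b c\<^esub> pconst k"

definition K_alg_iso :: "nat \<Rightarrow> nat \<Rightarrow> nat \<Rightarrow> nat \<Rightarrow> nat \<Rightarrow> nat
    \<Rightarrow> ('k::field mpoly set \<Rightarrow> 'k mpoly set) \<Rightarrow> bool" where
  "K_alg_iso a b c a' b' c' \<phi> \<longleftrightarrow>
     \<phi> \<in> ring_iso (Qalg a b c) (Qalg a' b' c') \<and>
     (\<forall>k. \<phi> (qconst a b c k) = qconst a' b' c' k)"

end

theory Submission
  imports Defs
begin

text \<open>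
  The ideal \<open>I_{ab}^c\<close> is generated by the binomials \<open>x_t x_u - x_{t'} x_{u'}\<close> where the
  index triples \<open>t', u'\<close> arise from \<open>t, u\<close> by exchanging one coordinate: 2-minors of the
  horizontal concatenation exchange the row index, those of the vertical concatenation the column
  index, and their sum exchanges the slice index. This generating set is invariant under permuting
  the three coordinates, so renaming the variables along a transposition of coordinates is an
  isomorphism of polynomial rings carrying one ideal onto the other, and it descends to the
  quotients. Two transpositions generate all permutations of the triple.
\<close>

lemma lookup_map_key:
  assumes [transfer_rule]: "inj f"
  shows "Poly_Mapping.lookup (Poly_Mapping.map_key f p) k = Poly_Mapping.lookup p (f k)"
  by transfer simp

lemma map_key_mult:
  fixes g :: "'m::monoid_add \<Rightarrow> 'm"
  assumes bij: "bij g" and add: "\<And>m n. g (m + n) = g m + g n"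
  shows "Poly_Mapping.map_key g (p * q :: 'm \<Rightarrow>\<^sub>0 'k::comm_semiring_1) =
    Poly_Mapping.map_key g p * Poly_Mapping.map_key g q"
proof (rule poly_mapping_eqI)
  fix m
  have inj: "inj g" using bij bij_is_inj by blast
  have "Poly_Mapping.lookup (Poly_Mapping.map_key g (p * q)) m =
      (\<Sum>l. Poly_Mapping.lookup p l * (\<Sum>n. Poly_Mapping.lookup q n when g m = l + n))"
    by (simp add: lookup_map_key[OF inj] lookup_mult)
  also have "\<dots> = (\<Sum>l. Poly_Mapping.lookup p (g l) *
      (\<Sum>n. Poly_Mapping.lookup q n when g m = g l + n))"
    by (rule Sum_any.reindex_cong[OF bij]) (simp add: fun_eq_iff)
  also have "\<dots> = (\<Sum>l. Poly_Mapping.lookup p (g l) *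
      (\<Sum>n. Poly_Mapping.lookup q (g n) when g m = g l + g n))"
    by (intro Sum_any.cong arg_cong[where f="\<lambda>x. _ * x"] Sum_any.reindex_cong[OF bij])
      (simp add: fun_eq_iff)
  also have "\<dots> = (\<Sum>l. Poly_Mapping.lookup p (g l) *
      (\<Sum>n. Poly_Mapping.lookup q (g n) when m = l + n))"
    by (simp add: add[symmetric] inj_eq[OF inj])
  also have "\<dots> = Poly_Mapping.lookup (Poly_Mapping.map_key g p * Poly_Mapping.map_key g q) m"
    by (simp add: lookup_map_key[OF inj] lookup_mult)
  finally show "Poly_Mapping.lookup (Poly_Mapping.map_key g (p * q)) m =
      Poly_Mapping.lookup (Poly_Mapping.map_key g p * Poly_Mapping.map_key g q) m" .
qed

definition rename_monom :: "('v \<Rightarrow> 'v) \<Rightarrow> ('v \<Rightarrow>\<^sub>0 nat) \<Rightarrow> 'v \<Rightarrow>\<^sub>0 nat" where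
  "rename_monom f m = Poly_Mapping.map_key f m"

definition rename_vars ::
    "('v \<Rightarrow> 'v) \<Rightarrow> (('v \<Rightarrow>\<^sub>0 nat) \<Rightarrow>\<^sub>0 'k::comm_ring_1) \<Rightarrow> ('v \<Rightarrow>\<^sub>0 nat) \<Rightarrow>\<^sub>0 'k" where
  "rename_vars f p = Poly_Mapping.map_key (rename_monom f) p"

locale involution =
  fixes f :: "'v \<Rightarrow> 'v"
  assumes involutive [simp]: "f (f x) = x"
begin

lemma injective: "inj f"
  by (metis involutive injI)

lemma image_eq_vimage: "f ` A = f -` A"
  by (auto intro: image_eqI[where x = "f _"])

lemma lookup_rename_monom: "Poly_Mapping.lookup (rename_monom f m) x = Poly_Mapping.lookup m (f x)"
  by (simp add: rename_monom_def lookup_map_key injective)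

lemma rename_monom_involutive [simp]: "rename_monom f (rename_monom f m) = m"
  by (rule poly_mapping_eqI) (simp add: lookup_rename_monom)

lemma bij_rename_monom: "bij (rename_monom f)"
  by (metis rename_monom_involutive bijI')

lemma rename_monom_add: "rename_monom f (m + n) = rename_monom f m + rename_monom f n"
  by (simp add: rename_monom_def map_key_plus injective)

lemma rename_monom_single: "rename_monom f (Poly_Mapping.single x k) = Poly_Mapping.single (f x) k"
  by (metis rename_monom_def map_key_single injective involutive)

lemma keys_rename_monom: "Poly_Mapping.keys (rename_monom f m) = f ` Poly_Mapping.keys m"
  by (simp add: rename_monom_def keys_map_key injective image_eq_vimage)

lemma lookup_rename_vars:
  "Poly_Mapping.lookup (rename_vars f p) m = Poly_Mapping.lookup p (rename_monom f m)"
  by (simp add: rename_vars_def lookup_map_key bij_is_inj[OF bij_rename_monom])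

lemma rename_vars_involutive [simp]: "rename_vars f (rename_vars f p) = p"
  by (rule poly_mapping_eqI) (simp add: lookup_rename_vars)

lemma rename_vars_add: "rename_vars f (p + q) = rename_vars f p + rename_vars f q"
  by (rule poly_mapping_eqI) (simp add: lookup_rename_vars lookup_add)

lemma rename_vars_diff: "rename_vars f (p - q) = rename_vars f p - rename_vars f q"
  by (rule poly_mapping_eqI) (simp add: lookup_rename_vars lookup_minus)

lemma rename_vars_mult: "rename_vars f (p * q) = rename_vars f p * rename_vars f q"
  by (simp add: rename_vars_def map_key_mult bij_rename_monom rename_monom_add)

lemma rename_vars_single:
  "rename_vars f (Poly_Mapping.single m c) = Poly_Mapping.single (rename_monom f m) c"
proof -
  have "Poly_Mapping.single m c = Poly_Mapping.single (rename_monom f (rename_monom f m)) c"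
    by simp
  then show ?thesis
    by (simp only: rename_vars_def map_key_single[OF bij_is_inj[OF bij_rename_monom]])
qed

lemma keys_rename_vars: "Poly_Mapping.keys (rename_vars f p) = rename_monom f ` Poly_Mapping.keys p"
  by (force simp: rename_vars_def keys_map_key bij_is_inj[OF bij_rename_monom] image_iff)

lemma rename_vars_one [simp]: "rename_vars f 1 = 1"
  by (simp add: rename_vars_single rename_monom_def injective flip: single_one)

end

lemma (in ring_hom_ring) image_genideal_subset:
  assumes G: "G \<subseteq> carrier R" and H: "H \<subseteq> carrier S" and gens: "h ` G \<subseteq> genideal S H"
  shows "h ` genideal R G \<subseteq> genideal S H"
proof -
  have "ideal {r \<in> carrier R. h r \<in> genideal S H} R"
    by (rule ideal_vimage[OF S.genideal_ideal[OF H]])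
  moreover have "G \<subseteq> {r \<in> carrier R. h r \<in> genideal S H}"
    using G gens by blast
  ultimately have "genideal R G \<subseteq> {r \<in> carrier R. h r \<in> genideal S H}"
    by (rule R.genideal_minimal)
  then show ?thesis by blast
qed

lemma FactRing_iso_of_inverse:
  assumes h: "ring_hom_ring R S h" and g: "ring_hom_ring S R g"
    and gh: "\<And>x. x \<in> carrier R \<Longrightarrow> g (h x) = x"
    and hg: "\<And>y. y \<in> carrier S \<Longrightarrow> h (g y) = y"
    and I: "ideal I R" and J: "ideal J S" and hI: "h ` I \<subseteq> J" and gJ: "g ` J \<subseteq> I"
  shows "\<exists>\<phi>. \<phi> \<in> ring_iso (R Quot I) (S Quot J) \<and>
    (\<forall>x \<in> carrier R. \<phi> (I +>\<^bsub>R\<^esub> x) = J +>\<^bsub>S\<^esub> h x)"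
proof -
  \<comment> \<open>First isomorphism theorem for \<open>R \<rightarrow> S \<rightarrow> S Quot J\<close>, a surjection with kernel \<open>I\<close>.\<close>
  interpret h: ring_hom_ring R S h by (rule h)
  interpret J: ideal J S by (rule J)
  define k where "k = (\<lambda>x. J +>\<^bsub>S\<^esub> h x)"
  have "k \<in> ring_hom R (S Quot J)"
    unfolding k_def using ring_hom_trans[OF h.homh J.rcos_ring_hom] by (simp add: comp_def)
  then interpret k: ring_hom_ring R "S Quot J" k
    by (intro ring_hom_ringI2 h.R.ring_axioms J.quotient_is_ring)
  have "k x = \<zero>\<^bsub>S Quot J\<^esub> \<longleftrightarrow> x \<in> I" if x: "x \<in> carrier R" for x
  proof -
    have "k x = \<zero>\<^bsub>S Quot J\<^esub> \<longleftrightarrow> J +>\<^bsub>S\<^esub> h x = J"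
      by (simp add: k_def FactRing_def)
    also have "\<dots> \<longleftrightarrow> h x \<in> J"
      using J.rcos_const_imp_mem[OF h.hom_closed[OF x]] J.a_rcos_const by blast
    also have "\<dots> \<longleftrightarrow> x \<in> I"
    proof
      assume "h x \<in> J"
      then have "g (h x) \<in> I" using gJ by blast
      then show "x \<in> I" by (simp add: gh x)
    qed (use hI in blast)
    finally show ?thesis .
  qed
  then have kernel: "a_kernel R (S Quot J) k = I"
    using ideal.Icarr[OF I] unfolding a_kernel_def' by blast
  have "k ` carrier R = carrier (S Quot J)"
  proof -
    have "J +>\<^bsub>S\<^esub> y \<in> k ` carrier R" if "y \<in> carrier S" for y
    proof
      show "J +>\<^bsub>S\<^esub> y = k (g y)" using hg[OF that] by (simp add: k_def)
      show "g y \<in> carrier R" using that ring_hom_closed[OF ring_hom_ring.homh[OF g]] by blast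
    qed
    then have "carrier (S Quot J) \<subseteq> k ` carrier R"
      by (auto simp: FactRing_def A_RCOSETS_def')
    then show ?thesis using k.hom_closed by blast
  qed
  then have "(\<lambda>X. the_elem (k ` X)) \<in> ring_iso (R Quot I) (S Quot J)"
    using k.FactRing_iso_set by (simp add: kernel)
  moreover have "the_elem (k ` (I +>\<^bsub>R\<^esub> x)) = J +>\<^bsub>S\<^esub> h x" if "x \<in> carrier R" for x
    using k.the_elem_simp[OF that] unfolding kernel by (simp add: k_def)
  ultimately show ?thesis by blast
qed

lemma pvars_add: "pvars (p + q) \<subseteq> pvars p \<union> pvars q"
  unfolding pvars_def using keys_add[of p q] by blast

lemma pvars_uminus [simp]: "pvars (- p) = pvars p"
  by (simp add: pvars_def keys_def)

lemma pvars_diff: "pvars (p - q) \<subseteq> pvars p \<union> pvars q"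
  using pvars_add[of p "- q"] by simp

lemma pvars_mult: "pvars (p * q) \<subseteq> pvars p \<union> pvars q"
proof
  fix x assume "x \<in> pvars (p * q)"
  then obtain m where m: "m \<in> Poly_Mapping.keys (p * q)" "x \<in> Poly_Mapping.keys m"
    by (auto simp: pvars_def)
  then obtain u v where "m = u + v" "u \<in> Poly_Mapping.keys p" "v \<in> Poly_Mapping.keys q"
    using keys_mult[of p q] by blast
  with m keys_add[of u v] show "x \<in> pvars p \<union> pvars q"
    by (auto simp: pvars_def)
qed

lemma pvars_xvar [simp]: "pvars (xvar i j k) = {(i, j, k)}"
  by (simp add: pvars_def xvar_def)

lemma pvars_pconst [simp]: "pvars (pconst c) = {}"
  by (simp add: pvars_def pconst_def)

lemma pvars_zero [simp]: "pvars 0 = {}"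
  by (simp add: pvars_def)

lemma pvars_one [simp]: "pvars 1 = {}"
  by (simp add: pvars_def)

lemma pvars_rename_vars: "involution f \<Longrightarrow> pvars (rename_vars f p) = f ` pvars p"
  by (auto simp: pvars_def involution.keys_rename_vars involution.keys_rename_monom)

lemma rename_vars_pconst: "involution f \<Longrightarrow> rename_vars f (pconst c) = pconst c"
  by (simp add: pconst_def involution.rename_vars_single rename_monom_def involution.injective)

lemma rename_vars_xvar:
  "involution f \<Longrightarrow>
    rename_vars f (xvar i j k) = (case f (i, j, k) of (i', j', k') \<Rightarrow> xvar i' j' k')"
  by (simp add: xvar_def involution.rename_vars_single involution.rename_monom_single
      split: prod.split)

abbreviation box :: "nat \<Rightarrow> nat \<Rightarrow> nat \<Rightarrow> (nat \<times> nat \<times> nat) set" where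
  "box a b c \<equiv> {1..a} \<times> {1..b} \<times> {1..c}"

lemma carrier_Rpoly: "carrier (Rpoly a b c) = {p. pvars p \<subseteq> box a b c}"
  by (simp add: Rpoly_def)

lemma Rpoly_simps [simp]:
  "mult (Rpoly a b c) = (*)" "add (Rpoly a b c) = (+)"
  "one (Rpoly a b c) = 1" "zero (Rpoly a b c) = 0"
  by (simp_all add: Rpoly_def)

lemma Rpoly_closed:
  assumes "p \<in> carrier (Rpoly a b c)" "q \<in> carrier (Rpoly a b c)"
  shows "p + q \<in> carrier (Rpoly a b c)" "p * q \<in> carrier (Rpoly a b c)"
    "- p \<in> carrier (Rpoly a b c)" "p - q \<in> carrier (Rpoly a b c)"
  using assms pvars_add[of p q] pvars_mult[of p q] pvars_diff[of p q]
  by (auto simp: carrier_Rpoly)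

lemma zero_one_in_Rpoly [simp]: "0 \<in> carrier (Rpoly a b c)" "1 \<in> carrier (Rpoly a b c)"
  by (simp_all add: carrier_Rpoly)

lemma pconst_in_Rpoly: "pconst x \<in> carrier (Rpoly a b c)"
  by (simp add: carrier_Rpoly)

lemma xvar_in_Rpoly: "(i, j, k) \<in> box a b c \<Longrightarrow> xvar i j k \<in> carrier (Rpoly a b c)"
  by (simp add: carrier_Rpoly)

lemma cring_Rpoly: "cring (Rpoly a b c)"
proof (rule cringI)
  show "abelian_group (Rpoly a b c)"
    by (rule abelian_groupI)
      (auto simp: Rpoly_closed add.assoc add.commute intro!: bexI[of _ "- _"])
  show "comm_monoid (Rpoly a b c)"
    by (rule comm_monoidI) (auto simp: Rpoly_closed mult.assoc mult.commute)
qed (simp add: distrib_right)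

lemma Rpoly_ideal_closed:
  assumes "ideal J (Rpoly a b c)"
  shows "0 \<in> J" "p \<in> J \<Longrightarrow> q \<in> J \<Longrightarrow> p + q \<in> J" "p \<in> J \<Longrightarrow> - p \<in> J"
proof -
  interpret ideal J "Rpoly a b c" by fact
  show "0 \<in> J" using additive_subgroup.zero_closed[OF is_additive_subgroup] by simp
  show "p \<in> J \<Longrightarrow> q \<in> J \<Longrightarrow> p + q \<in> J"
    using additive_subgroup.a_closed[OF is_additive_subgroup] by simp
  have "- 1 \<in> carrier (Rpoly a b c)" by (simp add: carrier_Rpoly)
  then show "p \<in> J \<Longrightarrow> - p \<in> J" using I_l_closed by fastforce
qed

lemma ring_hom_ring_rename_vars:
  assumes "involution f" "f ` box a b c \<subseteq> box a' b' c'"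
  shows "ring_hom_ring (Rpoly a b c) (Rpoly a' b' c') (rename_vars f)"
proof (intro ring_hom_ringI2 cring.axioms(1)[OF cring_Rpoly] ring_hom_memI)
  fix p assume "p \<in> carrier (Rpoly a b c)"
  then show "rename_vars f p \<in> carrier (Rpoly a' b' c')"
    using assms by (auto simp: carrier_Rpoly pvars_rename_vars)
qed (simp_all add: assms involution.rename_vars_add involution.rename_vars_mult
    involution.rename_vars_one)

definition exchange_binomials :: "nat \<Rightarrow> nat \<Rightarrow> nat \<Rightarrow> 'k::field mpoly set" where
  "exchange_binomials a b c =
    {xvar i j k * xvar i' j' k' - xvar i' j k * xvar i j' k' | i j k i' j' k'.
       (i, j, k) \<in> box a b c \<and> (i', j', k') \<in> box a b c}
  \<union> {xvar i j k * xvar i' j' k' - xvar i j' k * xvar i' j k' | i j k i' j' k'.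
       (i, j, k) \<in> box a b c \<and> (i', j', k') \<in> box a b c}
  \<union> {xvar i j k * xvar i' j' k' - xvar i j k' * xvar i' j' k | i j k i' j' k'.
       (i, j, k) \<in> box a b c \<and> (i', j', k') \<in> box a b c}"

lemma exchange_binomials_memI:
  assumes "(i, j, k) \<in> box a b c" "(i', j', k') \<in> box a b c"
  shows "xvar i j k * xvar i' j' k' - xvar i' j k * xvar i j' k' \<in> exchange_binomials a b c"
    and "xvar i j k * xvar i' j' k' - xvar i j' k * xvar i' j k' \<in> exchange_binomials a b c"
    and "xvar i j k * xvar i' j' k' - xvar i j k' * xvar i' j' k \<in> exchange_binomials a b c"
  using assms unfolding exchange_binomials_def by blast+

lemma exchange_binomials_subset_Rpoly: "exchange_binomials a b c \<subseteq> carrier (Rpoly a b c)"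
  unfolding exchange_binomials_def by (auto intro!: Rpoly_closed xvar_in_Rpoly)

lemma block_index:
  fixes b :: nat
  assumes "j \<in> {1..b}" "k \<in> {1..c}"
  shows "(k - 1) * b + j \<in> {1..b * c}"
    and "((k - 1) * b + j - 1) mod b + 1 = j" "((k - 1) * b + j - 1) div b + 1 = k"
proof -
  obtain j0 k0 where jk: "j = Suc j0" "k = Suc k0" "j0 < b" "k0 < c"
    using assms by (metis atLeastAtMost_iff Suc_le_D Suc_le_lessD One_nat_def)
  have "k0 * b + b \<le> b * c" using jk mult_le_mono1[of "Suc k0" c b] by (simp add: mult.commute)
  then show "(k - 1) * b + j \<in> {1..b * c}" using jk by simp
  show "((k - 1) * b + j - 1) mod b + 1 = j" "((k - 1) * b + j - 1) div b + 1 = k"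
    using jk by (simp_all add: add.commute)
qed

lemma block_index_decode:
  fixes p b :: nat
  assumes "p \<in> {1..b * c}"
  shows "(p - 1) mod b + 1 \<in> {1..b}" "(p - 1) div b + 1 \<in> {1..c}"
proof -
  have "0 < b" using assms by (cases b) auto
  then show "(p - 1) mod b + 1 \<in> {1..b}" by (simp add: Suc_leI)
  have "p - 1 < c * b" using assms by (auto simp: mult.commute)
  then have "(p - 1) div b < c" by (simp add: less_mult_imp_div_less)
  then show "(p - 1) div b + 1 \<in> {1..c}" by simp
qed

lemma hcat_block:
  assumes "j \<in> {1..b}" "k \<in> {1..c}"
  shows "hcat b i ((k - 1) * b + j) = xvar i j k"
  unfolding hcat_def block_index(2,3)[OF assms] ..

lemma vcat_block:
  assumes "i \<in> {1..a}" "k \<in> {1..c}"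
  shows "vcat a ((k - 1) * a + i) j = xvar i j k"
  unfolding vcat_def block_index(2,3)[OF assms] ..

lemma minors2_hcat_subset: "minors2 (hcat b) a (b * c) \<subseteq> exchange_binomials a b c"
proof
  fix e assume "e \<in> minors2 (hcat b) a (b * c)"
  then obtain i i' p q where e: "e = hcat b i p * hcat b i' q - hcat b i q * hcat b i' p"
    and ranges: "i \<in> {1..a}" "i' \<in> {1..a}" "p \<in> {1..b * c}" "q \<in> {1..b * c}"
    by (auto simp: minors2_def)
  let ?j = "\<lambda>p. (p - 1) mod b + 1" and ?k = "\<lambda>p. (p - 1) div b + 1"
  have "e = xvar i (?j p) (?k p) * xvar i' (?j q) (?k q)
      - xvar i' (?j p) (?k p) * xvar i (?j q) (?k q)"
    by (simp add: e hcat_def mult.commute)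
  also have "\<dots> \<in> exchange_binomials a b c"
    using ranges block_index_decode[of p b c] block_index_decode[of q b c]
    by (intro exchange_binomials_memI) auto
  finally show "e \<in> exchange_binomials a b c" .
qed

lemma minors2_vcat_subset: "minors2 (vcat a) (a * c) b \<subseteq> exchange_binomials a b c"
proof
  fix e assume "e \<in> minors2 (vcat a) (a * c) b"
  then obtain p p' j j' where e: "e = vcat a p j * vcat a p' j' - vcat a p j' * vcat a p' j"
    and ranges: "p \<in> {1..a * c}" "p' \<in> {1..a * c}" "j \<in> {1..b}" "j' \<in> {1..b}"
    by (auto simp: minors2_def)
  let ?i = "\<lambda>p. (p - 1) mod a + 1" and ?k = "\<lambda>p. (p - 1) div a + 1"
  have "e = xvar (?i p) j (?k p) * xvar (?i p') j' (?k p')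
      - xvar (?i p) j' (?k p) * xvar (?i p') j (?k p')"
    by (simp add: e vcat_def)
  also have "\<dots> \<in> exchange_binomials a b c"
    using ranges block_index_decode[of p a c] block_index_decode[of p' a c]
    by (intro exchange_binomials_memI) auto
  finally show "e \<in> exchange_binomials a b c" .
qed

lemma minor_in_ideal:
  assumes J: "ideal J (Rpoly a b c)" "minors2 M nr nc \<subseteq> J"
    and ranges: "i \<in> {1..nr}" "i' \<in> {1..nr}" "p \<in> {1..nc}" "q \<in> {1..nc}"
  shows "M i p * M i' q - M i q * M i' p \<in> J"
proof -
  have ordered: "M i p * M i' q - M i q * M i' p \<in> J"
    if "1 \<le> i" "i < i'" "i' \<le> nr" "1 \<le> p" "p < q" "q \<le> nc" for i i' p q
    using J(2) that unfolding minors2_def by blast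
  note zero = Rpoly_ideal_closed(1)[OF J(1)] and uminus = Rpoly_ideal_closed(3)[OF J(1)]
  consider "i = i' \<or> p = q" | "i < i'" "p < q" | "i < i'" "q < p"
    | "i' < i" "p < q" | "i' < i" "q < p"
    by linarith
  then show ?thesis
  proof cases
    case 1 then show ?thesis using zero by (auto simp: mult.commute)
  next
    case 2 then show ?thesis using ordered ranges by simp
  next
    case 3 then show ?thesis using uminus[OF ordered[of i i' q p]] ranges by simp
  next
    case 4
    then show ?thesis using uminus[OF ordered[of i' i p q]] ranges by (simp add: mult.commute)
  next
    case 5 then show ?thesis using ordered[of i' i q p] ranges by (simp add: mult.commute)
  qed
qed

lemma ideal_Iideal: "ideal (Iideal a b c) (Rpoly a b c)"
proof -
  have "minors2 (hcat b) a (b * c) \<union> minors2 (vcat a) (a * c) b \<subseteq> carrier (Rpoly a b c)"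
    using minors2_hcat_subset minors2_vcat_subset exchange_binomials_subset_Rpoly by blast
  then show ?thesis
    unfolding Iideal_def by (rule cring.axioms(1)[OF cring_Rpoly, THEN ring.genideal_ideal])
qed

lemma exchange_binomials_subset_Iideal: "exchange_binomials a b c \<subseteq> Iideal a b c"
proof -
  interpret cring "Rpoly a b c" by (rule cring_Rpoly)
  let ?H = "minors2 (hcat b) a (b * c)" and ?V = "minors2 (vcat a) (a * c) b"
  have "?H \<union> ?V \<subseteq> carrier (Rpoly a b c)"
    using minors2_hcat_subset minors2_vcat_subset exchange_binomials_subset_Rpoly by blast
  from genideal_self[OF this] have minors: "?H \<subseteq> Iideal a b c" "?V \<subseteq> Iideal a b c"
    unfolding Iideal_def by auto
  note J = ideal_Iideal[of a b c]
  have exch_i: "xvar i j k * xvar i' j' k' - xvar i' j k * xvar i j' k' \<in> Iideal a b c"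
    if "(i, j, k) \<in> box a b c" "(i', j', k') \<in> box a b c" for i j k i' j' k'
  proof -
    let ?p = "(k - 1) * b + j" and ?q = "(k' - 1) * b + j'"
    have minor: "hcat b i ?p * hcat b i' ?q - hcat b i ?q * hcat b i' ?p \<in> Iideal a b c"
      by (rule minor_in_ideal[OF J minors(1)])
        (use that block_index(1)[of j b k c] block_index(1)[of j' b k' c] in auto)
    have entries: "hcat b i ?p = xvar i j k" "hcat b i' ?q = xvar i' j' k'"
      "hcat b i ?q = xvar i j' k'" "hcat b i' ?p = xvar i' j k"
      using that hcat_block[of j b k c] hcat_block[of j' b k' c] by simp_all
    show ?thesis using minor unfolding entries mult.commute[of "xvar i j' k'" "xvar i' j k"] .
  qed
  have exch_j: "xvar i j k * xvar i' j' k' - xvar i j' k * xvar i' j k' \<in> Iideal a b c"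
    if "(i, j, k) \<in> box a b c" "(i', j', k') \<in> box a b c" for i j k i' j' k'
  proof -
    let ?p = "(k - 1) * a + i" and ?q = "(k' - 1) * a + i'"
    have minor: "vcat a ?p j * vcat a ?q j' - vcat a ?p j' * vcat a ?q j \<in> Iideal a b c"
      by (rule minor_in_ideal[OF J minors(2)])
        (use that block_index(1)[of i a k c] block_index(1)[of i' a k' c] in auto)
    have entries: "vcat a ?p j = xvar i j k" "vcat a ?q j' = xvar i' j' k'"
      "vcat a ?p j' = xvar i j' k" "vcat a ?q j = xvar i' j k'"
      using that vcat_block[of i a k c] vcat_block[of i' a k' c] by simp_all
    show ?thesis using minor unfolding entries .
  qed
  have exch_k: "xvar i j k * xvar i' j' k' - xvar i j k' * xvar i' j' k \<in> Iideal a b c"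
    if "(i, j, k) \<in> box a b c" "(i', j', k') \<in> box a b c" for i j k i' j' k'
  proof -
    have "(xvar i j k * xvar i' j' k' - xvar i' j k * xvar i j' k')
        + (xvar i' j k * xvar i j' k' - xvar i' j' k * xvar i j k') \<in> Iideal a b c"
      using that by (intro Rpoly_ideal_closed(2)[OF J] exch_i exch_j) auto
    then show ?thesis by (simp add: algebra_simps)
  qed
  show ?thesis
    unfolding exchange_binomials_def by (auto intro: exch_i exch_j exch_k)
qed

lemma Iideal_eq_genideal_exchange_binomials:
  "Iideal a b c = genideal (Rpoly a b c) (exchange_binomials a b c)"
proof
  interpret cring "Rpoly a b c" by (rule cring_Rpoly)
  note B = exchange_binomials_subset_Rpoly[of a b c]
  show "Iideal a b c \<subseteq> genideal (Rpoly a b c) (exchange_binomials a b c)"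
    unfolding Iideal_def using minors2_hcat_subset minors2_vcat_subset genideal_self[OF B]
    by (intro genideal_minimal[OF genideal_ideal[OF B]]) blast
  show "genideal (Rpoly a b c) (exchange_binomials a b c) \<subseteq> Iideal a b c"
    by (rule genideal_minimal[OF ideal_Iideal exchange_binomials_subset_Iideal])
qed

lemma genideal_self_exchange_binomials:
  "exchange_binomials a b c \<subseteq> genideal (Rpoly a b c) (exchange_binomials a b c)"
  using exchange_binomials_subset_Iideal by (simp add: Iideal_eq_genideal_exchange_binomials)

lemma K_alg_iso_rename_vars:
  assumes f: "involution f" and box: "f ` box a b c = box a' b' c'"
    and gens: "rename_vars f ` exchange_binomials a b c
        \<subseteq> (exchange_binomials a' b' c' :: 'k::field mpoly set)"
      "rename_vars f ` exchange_binomials a' b' c' \<subseteq> (exchange_binomials a b c :: 'k mpoly set)"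
  shows "\<exists>\<phi> :: 'k mpoly set \<Rightarrow> 'k mpoly set. K_alg_iso a b c a' b' c' \<phi>"
proof -
  have "f ` box a' b' c' = f ` f ` box a b c" by (simp only: box)
  also have "\<dots> = box a b c" by (simp add: image_image involution.involutive[OF f])
  finally have box': "f ` box a' b' c' = box a b c" .
  have h: "ring_hom_ring (Rpoly a b c :: 'k mpoly ring) (Rpoly a' b' c') (rename_vars f)"
    and g: "ring_hom_ring (Rpoly a' b' c' :: 'k mpoly ring) (Rpoly a b c) (rename_vars f)"
    using ring_hom_ring_rename_vars[OF f] box box' by (metis order_refl)+
  note B = exchange_binomials_subset_Rpoly
  have "rename_vars f ` exchange_binomials a b c
      \<subseteq> genideal (Rpoly a' b' c') (exchange_binomials a' b' c' :: 'k mpoly set)"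
    by (rule subset_trans[OF gens(1) genideal_self_exchange_binomials])
  then have hI: "rename_vars f ` Iideal a b c \<subseteq> (Iideal a' b' c' :: 'k mpoly set)"
    unfolding Iideal_eq_genideal_exchange_binomials
    by (rule ring_hom_ring.image_genideal_subset[OF h B B])
  have "rename_vars f ` exchange_binomials a' b' c'
      \<subseteq> genideal (Rpoly a b c) (exchange_binomials a b c :: 'k mpoly set)"
    by (rule subset_trans[OF gens(2) genideal_self_exchange_binomials])
  then have gJ: "rename_vars f ` Iideal a' b' c' \<subseteq> (Iideal a b c :: 'k mpoly set)"
    unfolding Iideal_eq_genideal_exchange_binomials
    by (rule ring_hom_ring.image_genideal_subset[OF g B B])
  have "\<exists>\<phi>. \<phi> \<in> ring_iso (Qalg a b c :: 'k mpoly set ring) (Qalg a' b' c') \<and>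
    (\<forall>p \<in> carrier (Rpoly a b c). \<phi> (Iideal a b c +>\<^bsub>Rpoly a b c\<^esub> p) =
      Iideal a' b' c' +>\<^bsub>Rpoly a' b' c'\<^esub> rename_vars f p)"
    unfolding Qalg_def
    by (rule FactRing_iso_of_inverse[OF h g _ _ ideal_Iideal ideal_Iideal hI gJ])
      (simp_all add: involution.rename_vars_involutive[OF f])
  then obtain \<phi> :: "'k mpoly set \<Rightarrow> 'k mpoly set"
    where \<phi>: "\<phi> \<in> ring_iso (Qalg a b c) (Qalg a' b' c')"
    and cosets: "\<And>p. p \<in> carrier (Rpoly a b c) \<Longrightarrow> \<phi> (Iideal a b c +>\<^bsub>Rpoly a b c\<^esub> p) =
      Iideal a' b' c' +>\<^bsub>Rpoly a' b' c'\<^esub> rename_vars f p"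
    by blast
  have "\<phi> (qconst a b c k) = qconst a' b' c' k" for k
    unfolding qconst_def cosets[OF pconst_in_Rpoly] rename_vars_pconst[OF f] ..
  with \<phi> show ?thesis unfolding K_alg_iso_def by blast
qed

definition transpose12 :: "nat \<times> nat \<times> nat \<Rightarrow> nat \<times> nat \<times> nat" where
  "transpose12 = (\<lambda>(i, j, k). (j, i, k))"

definition transpose23 :: "nat \<times> nat \<times> nat \<Rightarrow> nat \<times> nat \<times> nat" where
  "transpose23 = (\<lambda>(i, j, k). (i, k, j))"

lemma involution_transpose12: "involution transpose12"
  by unfold_locales (auto simp: transpose12_def)

lemma involution_transpose23: "involution transpose23"
  by unfold_locales (auto simp: transpose23_def)

lemma rename_vars_transpose12_xvar: "rename_vars transpose12 (xvar i j k) = xvar j i k"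
  using rename_vars_xvar[OF involution_transpose12, of i j k] by (simp add: transpose12_def)

lemma rename_vars_transpose23_xvar: "rename_vars transpose23 (xvar i j k) = xvar i k j"
  using rename_vars_xvar[OF involution_transpose23, of i j k] by (simp add: transpose23_def)

lemma rename_vars_transpose12_exchange_binomials:
  "rename_vars transpose12 ` exchange_binomials a b c \<subseteq> exchange_binomials b a c"
proof
  fix e assume "e \<in> rename_vars transpose12 ` exchange_binomials a b c"
  then obtain i j k i' j' k' where "(i, j, k) \<in> box a b c" "(i', j', k') \<in> box a b c"
    and "e \<in> rename_vars transpose12 ` {xvar i j k * xvar i' j' k' - xvar i' j k * xvar i j' k',
      xvar i j k * xvar i' j' k' - xvar i j' k * xvar i' j k',
      xvar i j k * xvar i' j' k' - xvar i j k' * xvar i' j' k}"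
    unfolding exchange_binomials_def by blast
  then show "e \<in> exchange_binomials b a c"
    using exchange_binomials_memI[of j i k b a c j' i' k']
    by (auto simp: involution.rename_vars_diff involution.rename_vars_mult involution_transpose12
        rename_vars_transpose12_xvar)
qed

lemma rename_vars_transpose23_exchange_binomials:
  "rename_vars transpose23 ` exchange_binomials a b c \<subseteq> exchange_binomials a c b"
proof
  fix e assume "e \<in> rename_vars transpose23 ` exchange_binomials a b c"
  then obtain i j k i' j' k' where "(i, j, k) \<in> box a b c" "(i', j', k') \<in> box a b c"
    and "e \<in> rename_vars transpose23 ` {xvar i j k * xvar i' j' k' - xvar i' j k * xvar i j' k',
      xvar i j k * xvar i' j' k' - xvar i j' k * xvar i' j k',
      xvar i j k * xvar i' j' k' - xvar i j k' * xvar i' j' k}"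
    unfolding exchange_binomials_def by blast
  then show "e \<in> exchange_binomials a c b"
    using exchange_binomials_memI[of i k j a c b i' k' j']
    by (auto simp: involution.rename_vars_diff involution.rename_vars_mult involution_transpose23
        rename_vars_transpose23_xvar)
qed

lemma K_alg_iso_refl: "K_alg_iso a b c a b c id"
  unfolding K_alg_iso_def using ring_iso_set_refl by simp

lemma K_alg_iso_trans:
  assumes "\<exists>\<phi> :: 'k::field mpoly set \<Rightarrow> 'k mpoly set. K_alg_iso a b c a' b' c' \<phi>"
    and "\<exists>\<psi> :: 'k mpoly set \<Rightarrow> 'k mpoly set. K_alg_iso a' b' c' a'' b'' c'' \<psi>"
  shows "\<exists>\<chi> :: 'k mpoly set \<Rightarrow> 'k mpoly set. K_alg_iso a b c a'' b'' c'' \<chi>"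
proof -
  from assms obtain \<phi> \<psi> :: "'k mpoly set \<Rightarrow> 'k mpoly set"
    where "K_alg_iso a b c a' b' c' \<phi>" "K_alg_iso a' b' c' a'' b'' c'' \<psi>"
    by blast
  then have "K_alg_iso a b c a'' b'' c'' (\<psi> \<circ> \<phi>)"
    unfolding K_alg_iso_def using ring_iso_set_trans by auto
  then show ?thesis by blast
qed

lemma K_alg_iso_transpose12: "\<exists>\<phi>. K_alg_iso a b c b a c (\<phi> :: 'k::field mpoly set \<Rightarrow> 'k mpoly set)"
proof (rule K_alg_iso_rename_vars[OF involution_transpose12])
  show "transpose12 ` box a b c = box b a c"
    by (auto simp: transpose12_def image_iff)
qed (rule rename_vars_transpose12_exchange_binomials)+

lemma K_alg_iso_transpose23: "\<exists>\<phi>. K_alg_iso a b c a c b (\<phi> :: 'k::field mpoly set \<Rightarrow> 'k mpoly set)"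
proof (rule K_alg_iso_rename_vars[OF involution_transpose23])
  show "transpose23 ` box a b c = box a c b"
    by (auto simp: transpose23_def image_iff)
qed (rule rename_vars_transpose23_exchange_binomials)+

theorem theorem4p1:
  fixes m n r m' n' r' :: nat
  assumes "0 < m" and "0 < n" and "0 < r"
    and "mset [m', n', r'] = mset [m, n, r]"
  shows "\<exists>\<phi> :: 'k::field mpoly set \<Rightarrow> 'k mpoly set. K_alg_iso m n r m' n' r' \<phi>"
proof -
  note t12 = K_alg_iso_transpose12 and t23 = K_alg_iso_transpose23
  have "(m', n', r') \<in> {(m, n, r), (n, m, r), (m, r, n), (n, r, m), (r, m, n), (r, n, m)}"
    using assms(4) by (auto simp: add_eq_conv_ex)
  then show ?thesis
  proof (elim insertE emptyE)
    assume "(m', n', r') = (m, n, r)" then show ?thesis using K_alg_iso_refl by blast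
  next
    assume "(m', n', r') = (n, m, r)" then show ?thesis using t12[of m n r] by simp
  next
    assume "(m', n', r') = (m, r, n)" then show ?thesis using t23[of m n r] by simp
  next
    assume "(m', n', r') = (n, r, m)"
    then show ?thesis using K_alg_iso_trans[OF t12[of m n r] t23] by simp
  next
    assume "(m', n', r') = (r, m, n)"
    then show ?thesis using K_alg_iso_trans[OF t23[of m n r] t12] by simp
  next
    assume "(m', n', r') = (r, n, m)"
    then show ?thesis using K_alg_iso_trans[OF K_alg_iso_trans[OF t12[of m n r] t23] t12] by simp
  qed
qed

end
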